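(* Let $\gamma>0$, $\gamma\neq1$ be constant. Then, as $r\to\infty$, \[ N^{\rm geom}_{\mathbb{R}}(r)=|N_1(r)-N_\gamma(r)|+O(1)=|1-\gamma|\,\frac{r}{\pi}+O(1). \]
   Context: Half-line problem: for $\lambda\neq0$, find $(u,v)$ on $[0,1]$ with $-u''-\lambda^2u=0$, $-v''-\lambda^2\gamma^2v=0$, $u(0)=v(0)=0$, $u(1)=v(1)$, $u'(1)=v'(1)$; $\lambda$ is an ITE if a nontrivial pair exists. The real ITEs are exactly the real nonzero zeros of $F(\lambda)=\gamma\sin\lambda\cos(\gamma\lambda)-\sin(\gamma\lambda)\cos\lambda$. $N^{\rm geom}_{\mathbb{R}}(r)$ is the number of real ITEs in $(0,r]$, each counted once (geometric multiplicity, which is always $1$). $N_1(r)$ is the number of Dirichlet eigenvalues $\lambda^2$ of $-d^2/dx^2$ on $(0,1)$ with $\lambda\in(0,r]$, and $N_\gamma(r)$ the same for $-\gamma^{-2}d^2/dx^2$ on $(0,1)$. *)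

theory Defs
  imports "HOL-Analysis.Analysis" "HOL-Library.Landau_Symbols"
begin

definition twice_diff_on01 :: "(real \<Rightarrow> real) \<Rightarrow> (real \<Rightarrow> real) \<Rightarrow> (real \<Rightarrow> real) \<Rightarrow> bool" where
  "twice_diff_on01 w w1 w2 \<longleftrightarrow>
     (\<forall>x\<in>{0..1}. (w has_real_derivative w1 x) (at x within {0..1}) \<and>
                 (w1 has_real_derivative w2 x) (at x within {0..1}))"

definition is_ITE :: "real \<Rightarrow> real \<Rightarrow> bool" where
  "is_ITE g l \<longleftrightarrow> l \<noteq> 0 \<and>
     (\<exists>u u' u'' v v' v''. twice_diff_on01 u u' u'' \<and> twice_diff_on01 v v' v'' \<and>
        (\<forall>x\<in>{0..1}. - u'' x - l^2 * u x = 0) \<and>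
        (\<forall>x\<in>{0..1}. - v'' x - l^2 * g^2 * v x = 0) \<and>
        u 0 = 0 \<and> v 0 = 0 \<and> u 1 = v 1 \<and> u' 1 = v' 1 \<and>
        (\<exists>x\<in>{0..1}. u x \<noteq> 0 \<or> v x \<noteq> 0))"

definition N_geom :: "real \<Rightarrow> real \<Rightarrow> nat" where
  "N_geom g r = card {l. 0 < l \<and> l \<le> r \<and> is_ITE g l}"

definition dirichlet_eig :: "real \<Rightarrow> real \<Rightarrow> bool" where
  "dirichlet_eig c \<mu> \<longleftrightarrow>
     (\<exists>u u' u''. twice_diff_on01 u u' u'' \<and>
        (\<forall>x\<in>{0..1}. - c * u'' x = \<mu> * u x) \<and>
        u 0 = 0 \<and> u 1 = 0 \<and> (\<exists>x\<in>{0..1}. u x \<noteq> 0))"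

text \<open>Number of Dirichlet eigenvalues lambda^2 of -c d^2/dx^2 with lambda in (0,r].
  N_1 = N_dir 1, N_gamma = N_dir (1/gamma^2).\<close>
definition N_dir :: "real \<Rightarrow> real \<Rightarrow> nat" where
  "N_dir c r = card {l. 0 < l \<and> l \<le> r \<and> dirichlet_eig c (l^2)}"

end

theory Submission
  imports Defs
begin

text \<open>The Dirichlet counting functions are \<open>\<lfloor>r/\<pi>\<rfloor>\<close> and \<open>\<lfloor>\<gamma>r/\<pi>\<rfloor>\<close>.
  For the ITEs, the determinant \<open>F(\<lambda>)\<close> of the matching conditions factors as
  \<open>F(\<lambda>) = \<surd>R \<cdot> sin (\<lambda> - \<theta>(\<gamma>\<lambda>))\<close>, where \<open>\<theta>(t)\<close> is a continuous polar angle of the point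
  \<open>(\<gamma> cos t, sin t)\<close> and \<open>R > 0\<close> its squared norm. Up to sign, the phase \<open>\<phi>(\<lambda>) = \<lambda> - \<theta>(\<gamma>\<lambda>)\<close>
  has derivative \<open>(1 - \<gamma>\<^sup>2) sin\<^sup>2(\<gamma>\<lambda>)/R\<close>, so it is strictly monotone for \<open>\<gamma> \<noteq> 1\<close>, and it stays
  within \<open>\<pi>/2\<close> of \<open>(1 - \<gamma>)\<lambda>\<close>. Hence the real ITEs in \<open>(0, r]\<close> are the points where \<open>|\<phi>|\<close>
  crosses a positive multiple of \<open>\<pi>\<close>, and their number is \<open>\<lfloor>|\<phi>(r)|/\<pi>\<rfloor> = |1 - \<gamma>| r/\<pi> + O(1)\<close>.\<close>

section \<open>Solutions of the boundary value problems\<close>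

lemma sine_solution_unique:
  fixes k :: real
  assumes td: "twice_diff_on01 u u' u''" and eq: "\<forall>x\<in>{0..1}. u'' x = - (k^2) * u x"
    and u0: "u 0 = 0" and k: "k \<noteq> 0"
  obtains a where "\<forall>x\<in>{0..1}. u x = a * sin (k * x) \<and> u' x = a * k * cos (k * x)"
proof -
  define A where "A = u' 0 / k"
  \<comment> \<open>The energy of the difference from the sine solution is conserved and vanishes at 0.\<close>
  define E where "E x = k^2 * (u x - A * sin (k * x))^2 + (u' x - A * k * cos (k * x))^2" for x
  have "(E has_field_derivative 0) (at x within {0..1})" if x: "x \<in> {0..1}" for x
  proof -
    have du: "(u has_real_derivative u' x) (at x within {0..1})"
      and du': "(u' has_real_derivative u'' x) (at x within {0..1})"
      using td x unfolding twice_diff_on01_def by auto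
    have "(E has_field_derivative
        k^2 * (2 * (u x - A * sin (k * x)) * (u' x - A * (cos (k * x) * k)))
        + 2 * (u' x - A * k * cos (k * x)) * (u'' x - A * k * (- sin (k * x) * k)))
        (at x within {0..1})"
      unfolding E_def
      by (rule derivative_eq_intros du du' refl | simp)+ (simp add: algebra_simps power2_eq_square)
    then show ?thesis
      using eq x by (simp add: algebra_simps power2_eq_square)
  qed
  then obtain C where C: "\<forall>x\<in>{0..1}. E x = C"
    using has_field_derivative_zero_constant[OF convex_real_interval(5)] by blast
  have "E 0 = 0" using k by (simp add: E_def u0 A_def)
  show ?thesis
  proof (rule that[of A], intro ballI)
    fix x :: real assume x: "x \<in> {0..1}"
    have "E x = 0" using C x \<open>E 0 = 0\<close> by auto
    then have "u x - A * sin (k * x) = 0 \<and> u' x - A * k * cos (k * x) = 0"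
      unfolding E_def using k by (simp add: add_nonneg_eq_0_iff)
    then show "u x = A * sin (k * x) \<and> u' x = A * k * cos (k * x)" by simp
  qed
qed

lemma twice_diff_on01_sin:
  "twice_diff_on01 (\<lambda>x. a * sin (k * x)) (\<lambda>x. a * k * cos (k * x)) (\<lambda>x. - a * k^2 * sin (k * x))"
  unfolding twice_diff_on01_def
proof (intro ballI conjI)
  fix x :: real
  show "((\<lambda>x. a * sin (k * x)) has_real_derivative a * k * cos (k * x)) (at x within {0..1})"
    by (rule derivative_eq_intros refl | simp)+
  show "((\<lambda>x. a * k * cos (k * x)) has_real_derivative - a * k^2 * sin (k * x)) (at x within {0..1})"
    by (rule derivative_eq_intros refl | simp)+ (simp add: power2_eq_square)
qed

lemma cos_or_sin_nonzero: "cos t \<noteq> 0 \<or> sin t \<noteq> 0" for t :: real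
  using sin_cos_squared_add[of t] by (auto simp del: sin_cos_squared_add)

lemma sin_nonzero_between:
  fixes a b :: real
  assumes "a < b"
  obtains x where "a < x" "x < b" "sin x \<noteq> 0"
proof (cases "sin ((a + b) / 2) = 0")
  case True
  then obtain i :: int where m: "(a + b) / 2 = of_int i * pi" by (auto simp: sin_zero_iff_int2)
  define y where "y = min ((b - a) / 2) pi / 2"
  have y: "0 < y" "y < pi" "y < (b - a) / 2"
    using assms pi_gt_zero unfolding y_def by (auto simp: min_def)
  have sin_i: "sin (of_int i * pi) = 0" by (auto simp: sin_zero_iff_int2)
  then have "sin ((a + b) / 2 + y) = cos (of_int i * pi) * sin y"
    by (simp add: m sin_add)
  moreover have "cos (of_int i * pi) \<noteq> 0" using sin_i cos_or_sin_nonzero by blast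
  moreover have "sin y \<noteq> 0" using y sin_gt_zero[of y] by auto
  moreover have "a < (a + b) / 2 + y" "(a + b) / 2 + y < b"
    using y assms by (simp_all add: field_simps)
  ultimately show ?thesis by (intro that[of "(a + b) / 2 + y"]) auto
next
  case False
  then show ?thesis using assms by (intro that[of "(a + b) / 2"]) auto
qed

lemma sin_mult_nonzero_between:
  fixes a b k :: real
  assumes "a < b" "k \<noteq> 0"
  obtains x where "a < x" "x < b" "sin (k * x) \<noteq> 0"
proof (cases "k > 0")
  case True
  obtain y where "k * a < y" "y < k * b" "sin y \<noteq> 0"
    using sin_nonzero_between[of "k * a" "k * b"] assms True by auto
  then show ?thesis using True by (intro that[of "y / k"]) (auto simp: field_simps)
next
  case False
  obtain y where "k * b < y" "y < k * a" "sin y \<noteq> 0"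
    using sin_nonzero_between[of "k * b" "k * a"] assms False by auto
  then show ?thesis using False assms by (intro that[of "y / k"]) (auto simp: field_simps)
qed

lemma nontrivial_solution_2x2_iff:
  fixes p q r s :: "'a :: field"
  shows "(\<exists>a b. (a \<noteq> 0 \<or> b \<noteq> 0) \<and> a * p = b * q \<and> a * r = b * s) \<longleftrightarrow> p * s = q * r"
proof
  assume "\<exists>a b. (a \<noteq> 0 \<or> b \<noteq> 0) \<and> a * p = b * q \<and> a * r = b * s"
  then obtain a b where ab: "a \<noteq> 0 \<or> b \<noteq> 0" and e: "a * p = b * q" "a * r = b * s" by blast
  have "a * (p * s - q * r) = (a * p) * s - q * (a * r)" by (simp add: algebra_simps)
  then have "a * (p * s - q * r) = 0" unfolding e by (simp add: algebra_simps)
  have "b * (p * s - q * r) = p * (b * s) - r * (b * q)" by (simp add: algebra_simps)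
  then have "b * (p * s - q * r) = 0" unfolding e[symmetric] by (simp add: algebra_simps)
  with \<open>a * (p * s - q * r) = 0\<close> show "p * s = q * r" using ab by auto
next
  assume det: "p * s = q * r"
  consider "q \<noteq> 0 \<or> p \<noteq> 0" | "s \<noteq> 0 \<or> r \<noteq> 0" | "p = 0" "q = 0" "r = 0" "s = 0" by blast
  then show "\<exists>a b. (a \<noteq> 0 \<or> b \<noteq> 0) \<and> a * p = b * q \<and> a * r = b * s"
  proof cases
    case 1 then show ?thesis using det by (intro exI[of _ q] exI[of _ p]) (auto simp: mult.commute)
  next
    case 2 then show ?thesis using det by (intro exI[of _ s] exI[of _ r]) (auto simp: mult.commute)
  next
    case 3 then show ?thesis by (intro exI[of _ 1] exI[of _ 0]) auto
  qed
qed

definition ITE_det :: "real \<Rightarrow> real \<Rightarrow> real" where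
  "ITE_det g l = g * sin l * cos (g * l) - sin (g * l) * cos l"

lemma ITE_det_eq_0_iff:
  "ITE_det g l = 0 \<longleftrightarrow>
     (\<exists>a b. (a \<noteq> 0 \<or> b \<noteq> 0) \<and> a * sin l = b * sin (g * l) \<and> a * cos l = b * (g * cos (g * l)))"
  using nontrivial_solution_2x2_iff[of "sin l" "sin (g * l)" "cos l" "g * cos (g * l)"]
  by (auto simp: ITE_det_def algebra_simps)

lemma is_ITE_imp_matching_amplitudes:
  assumes g: "g > 0" and "is_ITE g l"
  obtains a b where "a \<noteq> 0 \<or> b \<noteq> 0" "a * sin l = b * sin (g * l)" "a * cos l = b * (g * cos (g * l))"
proof -
  obtain u u' u'' v v' v'' where l: "l \<noteq> 0" and tu: "twice_diff_on01 u u' u''"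
    and tv: "twice_diff_on01 v v' v''"
    and eu: "\<forall>x\<in>{0..1}. - u'' x - l^2 * u x = 0"
    and ev: "\<forall>x\<in>{0..1}. - v'' x - l^2 * g^2 * v x = 0"
    and bc: "u 0 = 0" "v 0 = 0" "u 1 = v 1" "u' 1 = v' 1"
    and nt: "\<exists>x\<in>{0..1}. u x \<noteq> 0 \<or> v x \<noteq> 0"
    using \<open>is_ITE g l\<close> unfolding is_ITE_def by blast
  have lg: "l * g \<noteq> 0" using l g by simp
  have "\<forall>x\<in>{0..1}. u'' x = - (l^2) * u x" using eu by (auto simp: algebra_simps)
  then obtain a where U: "\<forall>x\<in>{0..1}. u x = a * sin (l * x) \<and> u' x = a * l * cos (l * x)"
    using sine_solution_unique[OF tu _ bc(1) l] by blast
  have "\<forall>x\<in>{0..1}. v'' x = - ((l * g)^2) * v x"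
    using ev by (auto simp: algebra_simps power_mult_distrib)
  then obtain b where V: "\<forall>x\<in>{0..1}. v x = b * sin (l * g * x) \<and> v' x = b * (l * g) * cos (l * g * x)"
    using sine_solution_unique[OF tv _ bc(2) lg] by blast
  have "a \<noteq> 0 \<or> b \<noteq> 0" using nt U V by auto
  moreover have "a * sin l = b * sin (g * l)"
    using bc(3) U[rule_format, of 1] V[rule_format, of 1] by (simp add: mult.commute)
  moreover have "l * (a * cos l) = l * (b * (g * cos (g * l)))"
    using bc(4) U[rule_format, of 1] V[rule_format, of 1] by (simp add: algebra_simps)
  then have "a * cos l = b * (g * cos (g * l))" using l by simp
  ultimately show ?thesis by (rule that)
qed

lemma is_ITE_if_matching_amplitudes:
  assumes g: "g > 0" and l: "l \<noteq> 0" and ab: "a \<noteq> 0 \<or> b \<noteq> 0"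
    and e: "a * sin l = b * sin (g * l)" "a * cos l = b * (g * cos (g * l))"
  shows "is_ITE g l"
proof -
  have lg: "l * g \<noteq> 0" using l g by simp
  obtain x where x: "0 < x" "x < 1" "sin (l * x) \<noteq> 0"
    using sin_mult_nonzero_between[of 0 1 l] l by auto
  obtain y where y: "0 < y" "y < 1" "sin (l * g * y) \<noteq> 0"
    using sin_mult_nonzero_between[of 0 1 "l * g"] lg by auto
  have nt: "\<exists>x\<in>{0..1}. a * sin (l * x) \<noteq> 0 \<or> b * sin (l * g * x) \<noteq> 0"
    using ab x y by (cases "a = 0") auto
  let ?u = "\<lambda>x. a * sin (l * x)" and ?u' = "\<lambda>x. a * l * cos (l * x)"
    and ?u'' = "\<lambda>x. - a * l^2 * sin (l * x)"
  let ?v = "\<lambda>x. b * sin (l * g * x)" and ?v' = "\<lambda>x. b * (l * g) * cos (l * g * x)"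
    and ?v'' = "\<lambda>x. - b * (l * g)^2 * sin (l * g * x)"
  have "?u 1 = ?v 1" "?u' 1 = ?v' 1"
    using e by (simp_all add: mult.commute mult.left_commute)
  then have "twice_diff_on01 ?u ?u' ?u'' \<and> twice_diff_on01 ?v ?v' ?v'' \<and>
      (\<forall>x\<in>{0..1}. - ?u'' x - l^2 * ?u x = 0) \<and> (\<forall>x\<in>{0..1}. - ?v'' x - l^2 * g^2 * ?v x = 0) \<and>
      ?u 0 = 0 \<and> ?v 0 = 0 \<and> ?u 1 = ?v 1 \<and> ?u' 1 = ?v' 1 \<and> (\<exists>x\<in>{0..1}. ?u x \<noteq> 0 \<or> ?v x \<noteq> 0)"
    using nt twice_diff_on01_sin[of a l] twice_diff_on01_sin[of b "l * g"]
    by (simp add: power_mult_distrib)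
  then show "is_ITE g l" unfolding is_ITE_def using l by blast
qed

lemma is_ITE_iff_det:
  assumes g: "g > 0"
  shows "is_ITE g l \<longleftrightarrow> l \<noteq> 0 \<and> ITE_det g l = 0"
  using is_ITE_imp_matching_amplitudes[OF g] is_ITE_if_matching_amplitudes[OF g]
  unfolding ITE_det_eq_0_iff by (metis is_ITE_def)

lemma dirichlet_eig_iff_sin:
  assumes c: "c > 0" and l: "l > 0"
  shows "dirichlet_eig c (l^2) \<longleftrightarrow> sin (l / sqrt c) = 0"
proof -
  define k where "k = l / sqrt c"
  have k: "k \<noteq> 0" using c l by (simp add: k_def)
  have k2: "k^2 = l^2 / c" using c by (simp add: k_def power_divide)
  show ?thesis
  proof
    assume "dirichlet_eig c (l^2)"
    then obtain u u' u'' where tu: "twice_diff_on01 u u' u''"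
      and e: "\<forall>x\<in>{0..1}. - c * u'' x = l^2 * u x" and bc: "u 0 = 0" "u 1 = 0"
      and nt: "\<exists>x\<in>{0..1}. u x \<noteq> 0" unfolding dirichlet_eig_def by blast
    have "\<forall>x\<in>{0..1}. u'' x = - (k^2) * u x" using e c unfolding k2
      by (auto simp: field_simps)
    then obtain a where U: "\<forall>x\<in>{0..1}. u x = a * sin (k * x) \<and> u' x = a * k * cos (k * x)"
      using sine_solution_unique[OF tu _ bc(1) k] by blast
    have "a \<noteq> 0" using nt U by auto
    moreover have "a * sin k = 0" using U[rule_format, of 1] bc by simp
    ultimately show "sin (l / sqrt c) = 0" by (simp add: k_def)
  next
    assume "sin (l / sqrt c) = 0"
    then have "sin k = 0" by (simp add: k_def)
    moreover obtain x where "0 < x" "x < 1" "sin (k * x) \<noteq> 0"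
      using sin_mult_nonzero_between[of 0 1 k] k by auto
    moreover have "- c * (- 1 * k^2 * sin (k * y)) = l^2 * (1 * sin (k * y))" for y
      using c by (simp add: k2)
    ultimately show "dirichlet_eig c (l^2)"
      unfolding dirichlet_eig_def using twice_diff_on01_sin[of 1 k]
      by (intro exI[of _ "\<lambda>x. 1 * sin (k * x)"] exI[of _ "\<lambda>x. 1 * k * cos (k * x)"]
          exI[of _ "\<lambda>x. - 1 * k^2 * sin (k * x)"] conjI) auto
  qed
qed

section \<open>Counting zeros\<close>

lemma card_sin_zeros_strict_mono:
  fixes h :: "real \<Rightarrow> real"
  assumes mono: "strict_mono_on {0..} h"
    and cont: "continuous_on {0..} h" and h0: "h 0 = 0" and r: "r \<ge> 0"
  shows "card {l. 0 < l \<and> l \<le> r \<and> sin (h l) = 0} = nat \<lfloor>h r / pi\<rfloor>"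
proof -
  define S where "S = {l. 0 < l \<and> l \<le> r \<and> sin (h l) = 0}"
  define f where "f l = round (h l / pi)" for l
  have key: "h l = of_int (f l) * pi \<and> f l \<in> {1..\<lfloor>h r / pi\<rfloor>}" if l: "l \<in> S" for l
  proof -
    from l have l0: "0 < l" "l \<le> r" "sin (h l) = 0" by (auto simp: S_def)
    then obtain i :: int where i: "h l = of_int i * pi" by (auto simp: sin_zero_iff_int2)
    have "0 < of_int i * pi" using strict_mono_onD[OF mono, of 0 l] l0 i h0 by simp
    then have "0 < i" by (simp add: zero_less_mult_iff)
    have "of_int i \<le> h r / pi"
      using strict_mono_on_leD[OF mono, of l r] l0 i by (simp add: field_simps)
    then have "i \<le> \<lfloor>h r / pi\<rfloor>" by (simp add: le_floor_iff)
    then show ?thesis using i \<open>0 < i\<close> by (simp add: f_def)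
  qed
  have "inj_on f S"
  proof (rule inj_onI)
    fix a b assume ab: "a \<in> S" "b \<in> S" "f a = f b"
    then have "h a = h b" using key[of a] key[of b] by simp
    moreover have "a \<in> {0..}" "b \<in> {0..}" using ab by (auto simp: S_def)
    ultimately show "a = b" using strict_mono_on_imp_inj_on[OF mono] by (simp add: inj_on_def)
  qed
  then have "card S = card (f ` S)" by (simp add: card_image)
  also have "f ` S = {1..\<lfloor>h r / pi\<rfloor>}"
  proof
    show "f ` S \<subseteq> {1..\<lfloor>h r / pi\<rfloor>}" using key by blast
  next
    show "{1..\<lfloor>h r / pi\<rfloor>} \<subseteq> f ` S"
    proof
      fix i assume i: "i \<in> {1..\<lfloor>h r / pi\<rfloor>}"
      then have le: "of_int i * pi \<le> h r" by (simp add: le_floor_iff field_simps)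
      have pos: "0 < of_int i * pi" using i by simp
      have "continuous_on {0..r} h" using cont by (rule continuous_on_subset) auto
      then obtain l where l: "0 \<le> l" "l \<le> r" "h l = of_int i * pi"
        using IVT'[of h 0 "of_int i * pi" r] h0 pos le r by auto
      have "l \<noteq> 0" using l(3) pos h0 by auto
      then have "l \<in> S" using l by (auto simp: S_def sin_zero_iff_int2)
      moreover have "f l = i" using l by (simp add: f_def)
      ultimately show "i \<in> f ` S" by force
    qed
  qed
  finally show ?thesis by (simp add: S_def)
qed

lemma N_dir_eq_floor:
  assumes c: "c > 0" and r: "r \<ge> 0"
  shows "N_dir c r = nat \<lfloor>r / sqrt c / pi\<rfloor>"
proof -
  have "{l. 0 < l \<and> l \<le> r \<and> dirichlet_eig c (l^2)} = {l. 0 < l \<and> l \<le> r \<and> sin (l / sqrt c) = 0}"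
    using dirichlet_eig_iff_sin[OF c] by auto
  moreover have "strict_mono_on {0..} (\<lambda>l. l / sqrt c)"
    using c by (intro strict_mono_onI) (simp add: divide_strict_right_mono)
  moreover have "continuous_on {0..} (\<lambda>l. l / sqrt c)" using c by (intro continuous_intros) simp
  ultimately show ?thesis
    unfolding N_dir_def using card_sin_zeros_strict_mono[where h = "\<lambda>l. l / sqrt c"] r by simp
qed

section \<open>A monotone phase for the ITE determinant\<close>

definition ellipse_norm_sq :: "real \<Rightarrow> real \<Rightarrow> real" where
  "ellipse_norm_sq g t = (g * cos t)^2 + (sin t)^2"

text \<open>A continuous polar angle of the point \<open>(g cos t, sin t)\<close>: the arctan term is the argument of
  \<open>(g cos t + i sin t)(cos t - i sin t) = (g cos\<^sup>2 t + sin\<^sup>2 t) + i (1 - g) sin t cos t\<close>,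
  whose real part is positive for \<open>g > 0\<close>.\<close>

definition ellipse_angle :: "real \<Rightarrow> real \<Rightarrow> real" where
  "ellipse_angle g t = t + arctan ((1 - g) * sin t * cos t / (g * (cos t)^2 + (sin t)^2))"

lemma ellipse_norm_sq_pos:
  assumes "g \<noteq> 0" shows "0 < ellipse_norm_sq g t"
proof -
  have "\<not> (cos t = 0 \<and> sin t = 0)" using cos_or_sin_nonzero by auto
  then show ?thesis using assms by (auto simp: ellipse_norm_sq_def add_pos_nonneg add_nonneg_pos)
qed

lemma ellipse_denominator_pos:
  fixes g t :: real
  assumes "g > 0" shows "0 < g * (cos t)^2 + (sin t)^2"
proof -
  have "\<not> (cos t = 0 \<and> sin t = 0)" using cos_or_sin_nonzero by auto
  then show ?thesis using assms by (auto simp: add_pos_nonneg add_nonneg_pos)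
qed

lemma ellipse_norm_sq_identity:
  fixes g c s :: real
  shows "(g * c^2 + s^2)^2 + ((1 - g) * s * c)^2 = ((g * c)^2 + s^2) * (s^2 + c^2)"
  by (simp add: algebra_simps power2_eq_square)

lemma cos_sin_ellipse_angle:
  assumes g: "g > 0"
  shows "cos (ellipse_angle g t) = g * cos t / sqrt (ellipse_norm_sq g t)"
    and "sin (ellipse_angle g t) = sin t / sqrt (ellipse_norm_sq g t)"
proof -
  define D where "D = g * (cos t)^2 + (sin t)^2"
  define N where "N = (1 - g) * sin t * cos t"
  define R where "R = ellipse_norm_sq g t"
  have D: "D > 0" using ellipse_denominator_pos[OF g] by (simp add: D_def)
  have R: "R > 0" using ellipse_norm_sq_pos g by (simp add: R_def)
  have "1 + (N / D)^2 = (D^2 + N^2) / D^2"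
    using D by (simp add: add_divide_distrib power_divide)
  also have "D^2 + N^2 = R"
    using ellipse_norm_sq_identity[of g "cos t" "sin t"] by (simp add: D_def N_def R_def ellipse_norm_sq_def)
  finally have "sqrt (1 + (N / D)^2) = sqrt R / D" using D by (simp add: real_sqrt_divide)
  then have ca: "cos (arctan (N / D)) = D / sqrt R" and sa: "sin (arctan (N / D)) = N / sqrt R"
    unfolding cos_arctan sin_arctan using D R by simp_all
  have "cos t * D - sin t * N = g * cos t * ((sin t)^2 + (cos t)^2)"
    "sin t * D + cos t * N = sin t * ((sin t)^2 + (cos t)^2)"
    by (simp_all add: D_def N_def algebra_simps power2_eq_square del: sin_cos_squared_add3)
  moreover have "cos (ellipse_angle g t) = (cos t * D - sin t * N) / sqrt R"
    "sin (ellipse_angle g t) = (sin t * D + cos t * N) / sqrt R"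
    unfolding ellipse_angle_def D_def[symmetric] N_def[symmetric] cos_add sin_add ca sa
    by (simp_all add: diff_divide_distrib add_divide_distrib)
  ultimately show "cos (ellipse_angle g t) = g * cos t / sqrt R" "sin (ellipse_angle g t) = sin t / sqrt R"
    by simp_all
qed

lemma ellipse_angle_approx: "\<bar>ellipse_angle g t - t\<bar> < pi / 2"
proof -
  have "- (pi / 2) < ellipse_angle g t - t \<and> ellipse_angle g t - t < pi / 2"
    using arctan_bounded by (simp add: ellipse_angle_def)
  then show ?thesis unfolding abs_less_iff by linarith
qed

lemma ellipse_angle_deriv:
  assumes g: "g > 0"
  shows "(ellipse_angle g has_real_derivative g / ellipse_norm_sq g t) (at t)"
proof -
  define n where "n = (\<lambda>t. (1 - g) * sin t * cos t)"
  define d where "d = (\<lambda>t. g * (cos t)^2 + (sin t)^2)"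
  define n' where "n' = (1 - g) * ((cos t)^2 - (sin t)^2)"
  define d' where "d' = 2 * (1 - g) * sin t * cos t"
  define R where "R = ellipse_norm_sq g t"
  have d: "d t > 0" using ellipse_denominator_pos[OF g] by (simp add: d_def)
  have R: "R > 0" using ellipse_norm_sq_pos g by (simp add: R_def)
  have "(n has_real_derivative n') (at t)"
    unfolding n_def n'_def by (rule derivative_eq_intros refl | simp add: algebra_simps power2_eq_square)+
  moreover have "(d has_real_derivative d') (at t)"
    unfolding d_def d'_def by (rule derivative_eq_intros refl | simp add: algebra_simps power2_eq_square)+
  ultimately have "((\<lambda>t. arctan (n t / d t)) has_real_derivative
      inverse (1 + (n t / d t)^2) * ((n' * d t - n t * d') / (d t * d t))) (at t)"
    using DERIV_chain2[OF DERIV_arctan DERIV_divide] d by auto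
  then have "(ellipse_angle g has_real_derivative
      1 + inverse (1 + (n t / d t)^2) * ((n' * d t - n t * d') / (d t * d t))) (at t)"
    unfolding ellipse_angle_def[abs_def] n_def d_def by (rule DERIV_add[OF DERIV_ident])
  also have "inverse (1 + (n t / d t)^2) = (d t)^2 / R"
  proof -
    have "(d t)^2 + (n t)^2 = R"
      using ellipse_norm_sq_identity[of g "cos t" "sin t"] by (simp add: d_def n_def R_def ellipse_norm_sq_def)
    then show ?thesis using d by (simp add: field_simps power2_eq_square)
  qed
  also have "n' * d t - n t * d' = g - R"
  proof -
    have "n' * d t - n t * d' = (1 - g) * (g * (cos t)^2 - (sin t)^2) * ((sin t)^2 + (cos t)^2)"
      by (simp add: n_def d_def n'_def d'_def algebra_simps power2_eq_square del: sin_cos_squared_add3)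
    also have "\<dots> = (g * ((sin t)^2 + (cos t)^2) - R) * ((sin t)^2 + (cos t)^2)"
      by (simp add: R_def ellipse_norm_sq_def algebra_simps power2_eq_square del: sin_cos_squared_add3)
    finally show ?thesis by simp
  qed
  also have "1 + (d t)^2 / R * ((g - R) / (d t * d t)) = g / R"
    using d R by (simp add: field_simps power2_eq_square)
  finally show ?thesis by (simp add: R_def)
qed

text \<open>The factor \<open>sgn (1 - g)\<close> makes the phase increasing for \<open>g < 1\<close> and \<open>g > 1\<close> alike.\<close>
definition ITE_phase :: "real \<Rightarrow> real \<Rightarrow> real" where
  "ITE_phase g l = sgn (1 - g) * (l - ellipse_angle g (g * l))"

lemma ITE_det_eq_sin:
  assumes g: "g > 0"
  shows "ITE_det g l = sqrt (ellipse_norm_sq g (g * l)) * sin (l - ellipse_angle g (g * l))"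
proof -
  have "sqrt (ellipse_norm_sq g (g * l)) > 0" using ellipse_norm_sq_pos g by simp
  then show ?thesis
    unfolding sin_diff cos_sin_ellipse_angle[OF g] ITE_det_def by (simp add: field_simps)
qed

lemma ITE_det_eq_0_iff_sin_phase:
  assumes g: "g > 0" and g1: "g \<noteq> 1"
  shows "ITE_det g l = 0 \<longleftrightarrow> sin (ITE_phase g l) = 0"
proof -
  have "sqrt (ellipse_norm_sq g (g * l)) > 0" using ellipse_norm_sq_pos g by simp
  moreover have "sgn (1 - g) = 1 \<or> sgn (1 - g) = -1" using g1 by (auto simp: sgn_if)
  moreover have "sin (y - x) = 0 \<longleftrightarrow> sin (x - y) = 0" for x y :: real
    by (metis minus_diff_eq sin_minus neg_equal_0_iff_equal)
  ultimately show ?thesis by (auto simp: ITE_det_eq_sin[OF g] ITE_phase_def)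
qed

lemma ITE_phase_0 [simp]: "ITE_phase g 0 = 0"
  by (simp add: ITE_phase_def ellipse_angle_def)

lemma ITE_phase_approx: "\<bar>ITE_phase g l - \<bar>1 - g\<bar> * l\<bar> < pi / 2"
proof -
  have "ITE_phase g l - \<bar>1 - g\<bar> * l = - sgn (1 - g) * (ellipse_angle g (g * l) - g * l)"
    by (simp add: ITE_phase_def sgn_if algebra_simps)
  then show ?thesis using ellipse_angle_approx[of g "g * l"] by (auto simp: sgn_if abs_minus_commute)
qed

lemma ITE_phase_deriv:
  assumes g: "g > 0"
  shows "(ITE_phase g has_real_derivative
           \<bar>1 - g\<bar> * (1 + g) * (sin (g * l))^2 / ellipse_norm_sq g (g * l)) (at l)"
proof -
  define R where "R = ellipse_norm_sq g (g * l)"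
  have R: "R > 0" using ellipse_norm_sq_pos g by (simp add: R_def)
  have "((\<lambda>l. ellipse_angle g (g * l)) has_real_derivative g / R * g) (at l)"
    unfolding R_def by (rule DERIV_chain2[OF ellipse_angle_deriv[OF g]]) (rule derivative_eq_intros refl | simp)+
  then have "(ITE_phase g has_real_derivative sgn (1 - g) * (1 - g / R * g)) (at l)"
    unfolding ITE_phase_def[abs_def] by (rule DERIV_cmult[OF DERIV_diff[OF DERIV_ident]])
  also have "sgn (1 - g) * (1 - g / R * g) = \<bar>1 - g\<bar> * (1 + g) * (sin (g * l))^2 / R"
  proof -
    have "R - g^2 * ((sin (g * l))^2 + (cos (g * l))^2) = (1 - g^2) * (sin (g * l))^2"
      unfolding R_def ellipse_norm_sq_def
      by (simp add: algebra_simps power2_eq_square del: sin_cos_squared_add sin_cos_squared_add3)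
    then have "R - g^2 = (1 - g^2) * (sin (g * l))^2" by simp
    moreover have "sgn (1 - g) * (1 - g / R * g) = sgn (1 - g) * (R - g^2) / R"
      using R by (simp add: field_simps power2_eq_square)
    moreover have "sgn (1 - g) * (1 - g^2) = \<bar>1 - g\<bar> * (1 + g)"
      by (simp add: sgn_if power2_eq_square algebra_simps)
    ultimately show ?thesis by (simp add: mult.assoc)
  qed
  finally show ?thesis by (simp add: R_def)
qed

lemma continuous_on_ITE_phase: "g > 0 \<Longrightarrow> continuous_on S (ITE_phase g)"
  by (rule DERIV_continuous_on, rule has_field_derivative_at_within, rule ITE_phase_deriv)

lemma mono_ITE_phase:
  assumes g: "g > 0"
  shows "mono (ITE_phase g)"
proof (rule monoI)
  fix a b :: real assume "a \<le> b"
  then show "ITE_phase g a \<le> ITE_phase g b"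
  proof (rule DERIV_nonneg_imp_increasing_open)
    fix x
    have "0 \<le> \<bar>1 - g\<bar> * (1 + g) * (sin (g * x))^2 / ellipse_norm_sq g (g * x)"
      using ellipse_norm_sq_pos[of g "g * x"] g by simp
    then show "\<exists>y. (ITE_phase g has_real_derivative y) (at x) \<and> 0 \<le> y"
      using ITE_phase_deriv[OF g] by blast
  qed (rule continuous_on_ITE_phase[OF g])
qed

lemma strict_mono_ITE_phase:
  assumes g: "g > 0" and g1: "g \<noteq> 1"
  shows "strict_mono (ITE_phase g)"
proof (rule strict_monoI)
  fix a b :: real assume ab: "a < b"
  have "g \<noteq> 0" using g by simp
  then obtain x where x: "a < x" "x < b" "sin (g * x) \<noteq> 0"
    using sin_mult_nonzero_between[OF ab] by blast
  have "0 < \<bar>1 - g\<bar> * (1 + g) * (sin (g * x))^2 / ellipse_norm_sq g (g * x)"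
    using ellipse_norm_sq_pos[of g "g * x"] g g1 x(3) by simp
  then obtain d where d: "d > 0" "\<And>h. 0 < h \<Longrightarrow> h < d \<Longrightarrow> ITE_phase g x < ITE_phase g (x + h)"
    using DERIV_pos_inc_right[OF ITE_phase_deriv[OF g]] by blast
  obtain h where h: "0 < h" "h < d" "h < b - x" using field_lbound_gt_zero[of d "b - x"] d x by auto
  have "ITE_phase g a \<le> ITE_phase g x" using mono_ITE_phase[OF g] x by (simp add: monoD)
  also have "\<dots> < ITE_phase g (x + h)" using d h by blast
  also have "\<dots> \<le> ITE_phase g b" using mono_ITE_phase[OF g] h(3) by (simp add: monoD)
  finally show "ITE_phase g a < ITE_phase g b" .
qed

section \<open>Asymptotics of the counting functions\<close>

lemma N_geom_eq_floor:
  assumes g: "g > 0" and g1: "g \<noteq> 1" and r: "r \<ge> 0"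
  shows "N_geom g r = nat \<lfloor>ITE_phase g r / pi\<rfloor>"
proof -
  have "{l. 0 < l \<and> l \<le> r \<and> is_ITE g l} = {l. 0 < l \<and> l \<le> r \<and> sin (ITE_phase g l) = 0}"
    using is_ITE_iff_det[OF g] ITE_det_eq_0_iff_sin_phase[OF g g1] by auto
  moreover have "strict_mono_on {0..} (ITE_phase g)"
    using strict_mono_ITE_phase[OF g g1] by (rule monotone_on_subset) simp
  ultimately show ?thesis
    unfolding N_geom_def using card_sin_zeros_strict_mono continuous_on_ITE_phase[OF g] r by simp
qed

lemma abs_floor_diff_approx:
  fixes a b :: real
  shows "\<bar>\<bar>of_int \<lfloor>a\<rfloor> - of_int \<lfloor>b\<rfloor>\<bar> - \<bar>a - b\<bar>\<bar> < 1"
proof -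
  have "\<bar>(of_int \<lfloor>a\<rfloor> - of_int \<lfloor>b\<rfloor>) - (a - b)\<bar> < 1"
    using of_int_floor_le[of a] of_int_floor_le[of b] real_of_int_floor_gt_diff_one[of a]
      real_of_int_floor_gt_diff_one[of b] by linarith
  then show ?thesis using abs_triangle_ineq3 by (rule le_less_trans[rotated])
qed

lemma ITE_counting_bounds:
  assumes g: "g > 0" and g1: "g \<noteq> 1" and r: "r \<ge> 0"
  shows "\<bar>real (N_geom g r) - \<bar>real (N_dir 1 r) - real (N_dir (1 / g^2) r)\<bar>\<bar> \<le> 3"
    and "\<bar>\<bar>real (N_dir 1 r) - real (N_dir (1 / g^2) r)\<bar> - \<bar>1 - g\<bar> * r / pi\<bar> \<le> 3"
proof -
  define u where "u = ITE_phase g r / pi"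
  have "ITE_phase g 0 \<le> ITE_phase g r" using mono_ITE_phase[OF g] r by (rule monoD)
  then have NG: "real (N_geom g r) = of_int \<lfloor>u\<rfloor>"
    using N_geom_eq_floor[OF g g1 r] by (simp add: u_def)
  have N1: "real (N_dir 1 r) = of_int \<lfloor>r / pi\<rfloor>"
    using N_dir_eq_floor[of 1 r] r by simp
  have Ng: "real (N_dir (1 / g^2) r) = of_int \<lfloor>g * r / pi\<rfloor>"
    using N_dir_eq_floor[of "1 / g^2" r] r g by (simp add: real_sqrt_divide mult.commute)
  have "r / pi - g * r / pi = (1 - g) * (r / pi)" by (simp add: algebra_simps diff_divide_distrib)
  then have linear: "\<bar>1 - g\<bar> * r / pi = \<bar>r / pi - g * r / pi\<bar>" using r by (simp add: abs_mult)
  have "\<bar>u - \<bar>1 - g\<bar> * r / pi\<bar> = \<bar>ITE_phase g r - \<bar>1 - g\<bar> * r\<bar> / pi"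
    by (simp add: u_def diff_divide_distrib[symmetric])
  also have "\<dots> < 1 / 2" using ITE_phase_approx[of g r] by (simp add: divide_less_eq)
  finally have u: "\<bar>u - \<bar>r / pi - g * r / pi\<bar>\<bar> < 1 / 2" unfolding linear .
  have floor: "\<bar>\<bar>of_int \<lfloor>r / pi\<rfloor> - of_int \<lfloor>g * r / pi\<rfloor>\<bar> - \<bar>r / pi - g * r / pi\<bar>\<bar> < 1"
    by (rule abs_floor_diff_approx)
  show "\<bar>real (N_geom g r) - \<bar>real (N_dir 1 r) - real (N_dir (1 / g^2) r)\<bar>\<bar> \<le> 3"
    using u floor of_int_floor_le[of u] real_of_int_floor_gt_diff_one[of u]
    unfolding NG N1 Ng abs_less_iff abs_le_iff by linarith
  show "\<bar>\<bar>real (N_dir 1 r) - real (N_dir (1 / g^2) r)\<bar> - \<bar>1 - g\<bar> * r / pi\<bar> \<le> 3"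
    using floor unfolding N1 Ng linear by linarith
qed

theorem theorem2:
  fixes \<gamma> :: real
  assumes "\<gamma> > 0" and "\<gamma> \<noteq> 1"
  shows "(\<lambda>r. real (N_geom \<gamma> r) - \<bar>real (N_dir 1 r) - real (N_dir (1 / \<gamma>^2) r)\<bar>)
            \<in> O[at_top](\<lambda>_. 1)
       \<and> (\<lambda>r. \<bar>real (N_dir 1 r) - real (N_dir (1 / \<gamma>^2) r)\<bar> - \<bar>1 - \<gamma>\<bar> * r / pi)
            \<in> O[at_top](\<lambda>_. 1)"
proof
  have ev: "eventually (\<lambda>r. r \<ge> (0::real)) at_top" by (rule eventually_ge_at_top)
  show "(\<lambda>r. real (N_geom \<gamma> r) - \<bar>real (N_dir 1 r) - real (N_dir (1 / \<gamma>^2) r)\<bar>) \<in> O[at_top](\<lambda>_. 1)"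
    using ITE_counting_bounds(1)[OF assms]
    by (intro bigoI[where c = 3] eventually_mono[OF ev]) simp
  show "(\<lambda>r. \<bar>real (N_dir 1 r) - real (N_dir (1 / \<gamma>^2) r)\<bar> - \<bar>1 - \<gamma>\<bar> * r / pi) \<in> O[at_top](\<lambda>_. 1)"
    using ITE_counting_bounds(2)[OF assms]
    by (intro bigoI[where c = 3] eventually_mono[OF ev]) simp
qed

end
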